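(* Let $B=\bigoplus_{i\in\mathbb{Z}}B_i$ be a $\mathbb{Z}$-graded noetherian normal integral domain of characteristic zero with $e(B)=1$. Let $d\in\mathbb{N}\setminus\{0,1\}$ and assume that $d$ is a unit of $B$ and that no height-$1$ prime ideal of $B$ contains $\mathcal{X}_d$. Then every derivation $\delta:B^{(d)}\to B^{(d)}$ extends uniquely to a derivation $D:B\to B$, and if $\delta$ is locally nilpotent then so is $D$.
   Context: $e(B)=\gcd\{i\in\mathbb{Z}:B_i\neq0\}$. $B^{(d)}=\bigoplus_{i\in\mathbb{Z}}B_{di}$. $\mathcal{X}_d$ is the set of nonzero homogeneous $x\in B$ with $\gcd(\deg x,d)=1$. *)

theory Defs
  imports "HOL-Computational_Algebra.Fraction_Field" "HOL-Computational_Algebra.Polynomial"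
begin

text \<open>Ideals of a commutative ring (type-class idiom: the ring is the whole type).\<close>
definition is_ideal :: "'a::comm_ring_1 set \<Rightarrow> bool" where
  "is_ideal I \<longleftrightarrow> 0 \<in> I \<and> (\<forall>x\<in>I. \<forall>y\<in>I. x + y \<in> I) \<and> (\<forall>x\<in>I. - x \<in> I)
     \<and> (\<forall>r. \<forall>x\<in>I. r * x \<in> I)"

definition is_prime_ideal :: "'a::comm_ring_1 set \<Rightarrow> bool" where
  "is_prime_ideal P \<longleftrightarrow> is_ideal P \<and> P \<noteq> UNIV \<and> (\<forall>a b. a * b \<in> P \<longrightarrow> a \<in> P \<or> b \<in> P)"

definition height_one_prime :: "'a::idom set \<Rightarrow> bool" where
  "height_one_prime P \<longleftrightarrow> is_prime_ideal P \<and> P \<noteq> {0} \<and>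
     (\<forall>Q. is_prime_ideal Q \<and> Q \<subseteq> P \<longrightarrow> Q = {0} \<or> Q = P)"

definition noetherian_ring :: "'a::comm_ring_1 itself \<Rightarrow> bool" where
  "noetherian_ring _ \<longleftrightarrow> (\<forall>I :: nat \<Rightarrow> 'a set. (\<forall>n. is_ideal (I n)) \<and> (\<forall>n. I n \<subseteq> I (Suc n))
       \<longrightarrow> (\<exists>N. \<forall>n\<ge>N. I n = I N))"

definition normal_domain :: "'a::idom itself \<Rightarrow> bool" where
  "normal_domain _ \<longleftrightarrow> (\<forall>z :: 'a fract.
      (\<exists>p :: 'a poly. lead_coeff p = 1 \<and> poly (map_poly (\<lambda>a. Fraction_Field.Fract a 1) p) z = 0)
      \<longrightarrow> (\<exists>b. z = Fraction_Field.Fract b 1))"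

definition Z_grading :: "(int \<Rightarrow> 'a::comm_ring_1 set) \<Rightarrow> bool" where
  "Z_grading G \<longleftrightarrow>
     (\<forall>i. 0 \<in> G i \<and> (\<forall>x\<in>G i. \<forall>y\<in>G i. x + y \<in> G i) \<and> (\<forall>x\<in>G i. - x \<in> G i)) \<and>
     (\<forall>i j. \<forall>x\<in>G i. \<forall>y\<in>G j. x * y \<in> G (i + j)) \<and>
     (\<forall>x. \<exists>!f :: int \<Rightarrow> 'a. finite {i. f i \<noteq> 0} \<and> (\<forall>i. f i \<in> G i) \<and> x = (\<Sum>i\<in>{i. f i \<noteq> 0}. f i))"

definition grading_e :: "(int \<Rightarrow> 'a::zero set) \<Rightarrow> int" where
  "grading_e G = Gcd {i. G i \<noteq> {0}}"

definition veronese :: "(int \<Rightarrow> 'a::comm_ring_1 set) \<Rightarrow> nat \<Rightarrow> 'a set" where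
  "veronese G d = {x. \<exists>f :: int \<Rightarrow> 'a. finite {i. f i \<noteq> 0} \<and> (\<forall>i. f i \<in> G (int d * i))
                         \<and> x = (\<Sum>i\<in>{i. f i \<noteq> 0}. f i)}"

definition X_set :: "(int \<Rightarrow> 'a::comm_ring_1 set) \<Rightarrow> nat \<Rightarrow> 'a set" where
  "X_set G d = {x. x \<noteq> 0 \<and> (\<exists>i. x \<in> G i \<and> coprime i (int d))}"

definition derivation_on :: "'a::comm_ring_1 set \<Rightarrow> ('a \<Rightarrow> 'a) \<Rightarrow> bool" where
  "derivation_on S \<delta> \<longleftrightarrow> (\<forall>x\<in>S. \<delta> x \<in> S) \<and>
     (\<forall>x\<in>S. \<forall>y\<in>S. \<delta> (x + y) = \<delta> x + \<delta> y) \<and>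
     (\<forall>x\<in>S. \<forall>y\<in>S. \<delta> (x * y) = x * \<delta> y + y * \<delta> x)"

definition locally_nilpotent_on :: "'a::comm_ring_1 set \<Rightarrow> ('a \<Rightarrow> 'a) \<Rightarrow> bool" where
  "locally_nilpotent_on S \<delta> \<longleftrightarrow> (\<forall>x\<in>S. \<exists>n. (\<delta> ^^ n) x = 0)"

end

theory Submission
  imports Defs "HOL-Computational_Algebra.Polynomial_Factorial"
begin

text \<open>
  For homogeneous \<open>h\<close> of degree \<open>i\<close> the power \<open>h^d\<close> lies in \<open>B^(d)\<close>, so every extension
  \<open>D\<close> of \<open>\<delta>\<close> satisfies \<open>d h^(d-1) D(h) = \<delta>(h^d)\<close>. This forces uniqueness, and it defines
  \<open>D\<close> on homogeneous elements once \<open>d h^(d-1)\<close> divides \<open>\<delta>(h^d)\<close>. Divisibility is checked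
  with a Krull-type criterion: in a noetherian normal domain, \<open>b\<close> divides \<open>a\<close> as soon as the
  colon ideal \<open>(bB : a)\<close> lies in no height-one prime, because a maximal colon ideal
  \<open>(bB : c)\<close> with \<open>c \<notin> bB\<close> is prime, and normality makes it of height one. Given a
  height-one prime \<open>P\<close>, pick \<open>u \<in> \<X>\<^sub>d\<close> outside \<open>P\<close> and \<open>k\<close> such that \<open>d\<close> divides the degree
  of \<open>h u^k\<close>; expanding \<open>\<delta>((h u^k)^d)\<close> shows \<open>u^(kd) \<delta>(h^d) \<in> d h^(d-1) B\<close>, as \<open>d\<close> is a
  unit. The map so defined on homogeneous elements is additive and satisfies the Leibniz
  rule, hence extends to a derivation of \<open>B\<close>.

  If \<open>\<delta>\<close> is locally nilpotent, take \<open>h\<close> homogeneous, \<open>a = h^d\<close> and \<open>q_k = h^(d-1) D^k(h)\<close>.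
  These lie in \<open>B^(d)\<close> and satisfy \<open>d a q_(k+1) + (d-1) \<delta>(a) q_k = d a \<delta>(q_k)\<close>. In
  characteristic zero the \<open>\<delta>\<close>-degree is additive on products of nonzero elements, so the
  \<open>\<delta>\<close>-degrees of the \<open>q_k\<close> strictly decrease and \<open>D^k(h)\<close> must vanish.
\<close>

section \<open>Noetherian normal domains\<close>

lemma is_ideal_zero: "is_ideal I \<Longrightarrow> 0 \<in> I"
  unfolding is_ideal_def by blast

lemma is_ideal_mult: "is_ideal I \<Longrightarrow> x \<in> I \<Longrightarrow> r * x \<in> I"
  unfolding is_ideal_def by blast

lemma is_prime_ideal_ideal: "is_prime_ideal P \<Longrightarrow> is_ideal P"
  unfolding is_prime_ideal_def by blast

lemma is_prime_ideal_mult: "is_prime_ideal P \<Longrightarrow> x * y \<in> P \<Longrightarrow> x \<in> P \<or> y \<in> P"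
  unfolding is_prime_ideal_def by blast

lemma noetherian_ring_chain_stationary:
  assumes "noetherian_ring TYPE('a::comm_ring_1)"
    and "\<And>n. is_ideal (I n :: 'a set)" and "\<And>n. I n \<subseteq> I (Suc n)"
  obtains N where "I (Suc N) = I N"
proof -
  obtain N where "\<forall>n\<ge>N. I n = I N"
    using assms unfolding noetherian_ring_def by blast
  then have "I (Suc N) = I N" by (metis le_SucI order.refl)
  then show thesis by (rule that)
qed

lemma noetherian_ring_maximal_ideal:
  fixes F :: "'a::comm_ring_1 set set"
  assumes "noetherian_ring TYPE('a)" "F \<noteq> {}" "\<forall>I\<in>F. is_ideal I"
  shows "\<exists>P\<in>F. \<forall>Q\<in>F. P \<subseteq> Q \<longrightarrow> Q = P"
proof (rule ccontr)
  assume "\<not> ?thesis"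
  then have bigger: "\<forall>X\<in>F. \<exists>Y\<in>F. X \<subset> Y" by blast
  define next_ideal where "next_ideal X = (SOME Y. Y \<in> F \<and> X \<subset> Y)" for X
  have next_ideal: "next_ideal X \<in> F \<and> X \<subset> next_ideal X" if "X \<in> F" for X
    unfolding next_ideal_def using someI_ex[of "\<lambda>Y. Y \<in> F \<and> X \<subset> Y"] bigger that by blast
  define chain where "chain n = (next_ideal ^^ n) (SOME X. X \<in> F)" for n
  have chain_in: "chain n \<in> F" for n
    by (induction n) (simp_all add: chain_def next_ideal some_in_eq assms(2))
  have chain_psubset: "chain n \<subset> chain (Suc n)" for n
    using next_ideal[OF chain_in[of n]] by (simp add: chain_def)
  obtain N where "chain (Suc N) = chain N"
    using noetherian_ring_chain_stationary[OF assms(1), where I = chain] chain_in chain_psubset assms(3)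
    by (meson psubset_imp_subset)
  with chain_psubset[of N] show False by simp
qed

lemma fract_poly_sum: "fract_poly (\<Sum>k\<in>A. p k) = (\<Sum>k\<in>A. fract_poly (p k))"
  by (induction A rule: infinite_finite_induct) auto

lemma is_ideal_polynomial_multiples:
  fixes q :: "'a::idom" and w :: "'a fract"
  shows "is_ideal {y. \<exists>r. to_fract y = to_fract q * (\<Sum>k\<le>n. to_fract (r k) * w ^ k)}"
  unfolding is_ideal_def
proof (intro conjI ballI allI)
  show "0 \<in> {y. \<exists>r. to_fract y = to_fract q * (\<Sum>k\<le>n. to_fract (r k) * w ^ k)}"
    by (auto intro: exI[of _ "\<lambda>_. 0"])
next
  fix x y
  assume "x \<in> {y. \<exists>r. to_fract y = to_fract q * (\<Sum>k\<le>n. to_fract (r k) * w ^ k)}"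
    and "y \<in> {y. \<exists>r. to_fract y = to_fract q * (\<Sum>k\<le>n. to_fract (r k) * w ^ k)}"
  then obtain r s where "to_fract x = to_fract q * (\<Sum>k\<le>n. to_fract (r k) * w ^ k)"
    "to_fract y = to_fract q * (\<Sum>k\<le>n. to_fract (s k) * w ^ k)" by blast
  then show "x + y \<in> {y. \<exists>r. to_fract y = to_fract q * (\<Sum>k\<le>n. to_fract (r k) * w ^ k)}"
    by (intro CollectI exI[of _ "\<lambda>k. r k + s k"]) (simp add: sum.distrib algebra_simps)
next
  fix x t assume "x \<in> {y. \<exists>r. to_fract y = to_fract q * (\<Sum>k\<le>n. to_fract (r k) * w ^ k)}"
  then obtain r where r: "to_fract x = to_fract q * (\<Sum>k\<le>n. to_fract (r k) * w ^ k)" by blast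
  from r show "- x \<in> {y. \<exists>r. to_fract y = to_fract q * (\<Sum>k\<le>n. to_fract (r k) * w ^ k)}"
    by (intro CollectI exI[of _ "\<lambda>k. - r k"]) (simp add: sum_negf)
  from r show "t * x \<in> {y. \<exists>r. to_fract y = to_fract q * (\<Sum>k\<le>n. to_fract (r k) * w ^ k)}"
    by (intro CollectI exI[of _ "\<lambda>k. t * r k"]) (simp add: sum_distrib_left mult_ac)
qed

lemma monic_poly_if_power_combination:
  fixes w :: "'a::idom fract"
  assumes "w ^ Suc N = (\<Sum>k\<le>N. to_fract (r k) * w ^ k)"
  obtains p :: "'a poly" where "lead_coeff p = 1" "poly (fract_poly p) w = 0"
proof
  define p where "p = monom (1::'a) (Suc N) - (\<Sum>k\<le>N. monom (r k) k)"
  have lower: "degree (\<Sum>k\<le>N. monom (r k) k) \<le> N"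
    by (rule degree_sum_le) (auto intro: order.trans[OF degree_monom_le])
  then have "degree p = Suc N"
    using degree_add_eq_left[of "- (\<Sum>k\<le>N. monom (r k) k)" "monom 1 (Suc N)"]
    by (simp add: p_def degree_monom_eq)
  with lower show "lead_coeff p = 1" by (simp add: p_def coeff_eq_0)
  have "poly (fract_poly p) w = w ^ Suc N - (\<Sum>k\<le>N. to_fract (r k) * w ^ k)"
    by (simp add: p_def fract_poly_sum map_poly_monom poly_sum poly_monom)
  with assms show "poly (fract_poly p) w = 0" by simp
qed

lemma noetherian_integral_if_bounded_denominator:
  fixes q :: "'a::idom" and w :: "'a fract"
  assumes noeth: "noetherian_ring TYPE('a)" and "q \<noteq> 0"
    and bounded: "\<And>n. to_fract q * w ^ n \<in> range to_fract"
  obtains p :: "'a poly" where "lead_coeff p = 1" "poly (fract_poly p) w = 0"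
proof -
  define J where
    "J n = {y. \<exists>r. to_fract y = to_fract q * (\<Sum>k\<le>n. to_fract (r k) * w ^ k)}" for n
  \<comment> \<open>where this chain becomes stationary, \<open>q w ^ (N + 1)\<close> is a combination of the
    \<open>q w ^ k\<close> with \<open>k \<le> N\<close>, so \<open>w\<close> is integral\<close>
  have "J n \<subseteq> J (Suc n)" for n
  proof
    fix y assume "y \<in> J n"
    then obtain r where "to_fract y = to_fract q * (\<Sum>k\<le>n. to_fract (r k) * w ^ k)"
      unfolding J_def by blast
    then show "y \<in> J (Suc n)" unfolding J_def
      by (intro CollectI exI[of _ "\<lambda>k. if k \<le> n then r k else 0"]) simp
  qed
  with is_ideal_polynomial_multiples obtain N where J_Suc: "J (Suc N) = J N"
    unfolding J_def by (rule noetherian_ring_chain_stationary[OF noeth])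
  obtain s where s: "to_fract s = to_fract q * w ^ Suc N" using bounded by (metis rangeE)
  have "s \<in> J (Suc N)" unfolding J_def
  proof (intro CollectI exI[of _ "\<lambda>k. if k = Suc N then 1 else 0"])
    have "(\<Sum>k\<le>Suc N. to_fract (if k = Suc N then 1 else 0) * w ^ k) = w ^ Suc N"
      by (simp add: if_distrib cong: if_cong)
    with s show "to_fract s
        = to_fract q * (\<Sum>k\<le>Suc N. to_fract (if k = Suc N then 1 else 0) * w ^ k)"
      by simp
  qed
  then have "s \<in> J N" using J_Suc by simp
  then obtain r where "to_fract s = to_fract q * (\<Sum>k\<le>N. to_fract (r k) * w ^ k)"
    unfolding J_def by blast
  with s \<open>q \<noteq> 0\<close> have "w ^ Suc N = (\<Sum>k\<le>N. to_fract (r k) * w ^ k)" by simp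
  with monic_poly_if_power_combination that show thesis by blast
qed

lemma normal_domain_integral:
  fixes w :: "'a::idom fract"
  assumes "normal_domain TYPE('a)" "lead_coeff p = 1" "poly (fract_poly p) w = 0"
  obtains b where "w = to_fract b"
  using assms unfolding normal_domain_def to_fract_def[abs_def] by blast

lemma normal_domain_dvd_if_stable_ideal:
  fixes b c :: "'a::idom"
  assumes noeth: "noetherian_ring TYPE('a)" and normal: "normal_domain TYPE('a)"
    and "b \<noteq> 0" and Q: "is_ideal Q" "q \<in> Q" "q \<noteq> 0"
    and stable: "\<And>x. x \<in> Q \<Longrightarrow> \<exists>x'\<in>Q. b * x' = c * x"
  shows "b dvd c"
proof -
  define w where "w = to_fract c / to_fract b"
  define step where "step x = (SOME x'. x' \<in> Q \<and> b * x' = c * x)" for x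
  have step: "step x \<in> Q \<and> b * step x = c * x" if "x \<in> Q" for x
    unfolding step_def using someI_ex[of "\<lambda>x'. x' \<in> Q \<and> b * x' = c * x"] stable[OF that] by blast
  have "(step ^^ n) q \<in> Q \<and> to_fract ((step ^^ n) q) = to_fract q * w ^ n" for n
  proof (induction n)
    case (Suc n)
    let ?x = "(step ^^ n) q"
    have "to_fract b * to_fract (step ?x) = to_fract c * to_fract ?x"
      using step[of ?x] Suc.IH by (metis to_fract_mult)
    with \<open>b \<noteq> 0\<close> have "to_fract (step ?x) = w * to_fract ?x"
      by (simp add: w_def field_simps)
    with Suc.IH step[of ?x] show ?case by simp
  qed (simp add: Q)
  then have "to_fract q * w ^ n \<in> range to_fract" for n by (metis rangeI)
  then obtain p :: "'a poly" where "lead_coeff p = 1" "poly (fract_poly p) w = 0"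
    using noetherian_integral_if_bounded_denominator[OF noeth \<open>q \<noteq> 0\<close>] by blast
  then obtain e where "w = to_fract e" using normal_domain_integral[OF normal] by blast
  with \<open>b \<noteq> 0\<close> have "c = b * e" by (simp add: w_def field_simps flip: to_fract_mult)
  then show ?thesis by simp
qed

definition colon_ideal :: "'a::comm_ring_1 \<Rightarrow> 'a \<Rightarrow> 'a set" where
  "colon_ideal b c = {r. b dvd r * c}"

lemma is_ideal_colon_ideal: "is_ideal (colon_ideal b c)"
  unfolding is_ideal_def colon_ideal_def
  by (auto simp: distrib_right dvd_add mult.assoc)

lemma colon_ideal_mono: "colon_ideal b c \<subseteq> colon_ideal b (x * c)"
  unfolding colon_ideal_def by (auto simp: mult.left_commute[of _ x])

lemma prime_colon_ideal_if_maximal: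
  assumes "\<not> b dvd c"
    and maximal: "\<And>x. \<not> b dvd x * c \<Longrightarrow> colon_ideal b (x * c) = colon_ideal b c"
  shows "is_prime_ideal (colon_ideal b c)"
  unfolding is_prime_ideal_def
proof (intro conjI allI impI)
  show "is_ideal (colon_ideal b c)" by (rule is_ideal_colon_ideal)
  show "colon_ideal b c \<noteq> UNIV"
    using \<open>\<not> b dvd c\<close> unfolding colon_ideal_def by (metis UNIV_I mem_Collect_eq mult_1)
next
  fix x y assume xy: "x * y \<in> colon_ideal b c"
  show "x \<in> colon_ideal b c \<or> y \<in> colon_ideal b c"
  proof (cases "b dvd x * c")
    case False
    with xy maximal[OF False] show ?thesis by (auto simp: colon_ideal_def mult_ac)
  qed (simp add: colon_ideal_def)
qed

lemma is_prime_ideal_power: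
  assumes "is_prime_ideal P" "x ^ n \<in> P"
  shows "x \<in> P"
  using assms(2)
proof (induction n)
  case 0
  then have "1 \<in> P" by simp
  from is_ideal_mult[OF is_prime_ideal_ideal[OF assms(1)] this, of x] show ?case by simp
qed (auto dest: is_prime_ideal_mult[OF assms(1)])

lemma height_one_colon_ideal:
  fixes b c :: "'a::idom"
  assumes noeth: "noetherian_ring TYPE('a)" and normal: "normal_domain TYPE('a)"
    and "b \<noteq> 0" and prime: "is_prime_ideal (colon_ideal b c)"
  shows "height_one_prime (colon_ideal b c)" (is "height_one_prime ?P")
  unfolding height_one_prime_def
proof (intro conjI allI impI)
  show "is_prime_ideal ?P" by (rule prime)
  have "b \<in> ?P" by (simp add: colon_ideal_def)
  with \<open>b \<noteq> 0\<close> show "?P \<noteq> {0}" by blast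
next
  fix Q assume "is_prime_ideal Q \<and> Q \<subseteq> ?P"
  then have Q: "is_prime_ideal Q" "Q \<subseteq> ?P" by blast+
  show "Q = {0} \<or> Q = ?P"
  proof (rule ccontr)
    assume "\<not> (Q = {0} \<or> Q = ?P)"
    then obtain q p where q: "q \<in> Q" "q \<noteq> 0" and p: "p \<in> ?P" "p \<notin> Q"
      using Q is_ideal_zero[OF is_prime_ideal_ideal[OF Q(1)]] by blast
    obtain s where s: "p * c = b * s" using p(1) by (auto simp: colon_ideal_def elim!: dvdE)
    \<comment> \<open>multiplication by \<open>c / b\<close> maps \<open>Q\<close> into itself, so \<open>c / b\<close> is integral\<close>
    have "\<exists>x'\<in>Q. b * x' = c * x" if x: "x \<in> Q" for x
    proof -
      obtain x' where x': "x * c = b * x'"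
        using x Q(2) by (auto simp: colon_ideal_def elim!: dvdE)
      then have "b * (x' * p) = b * (x * s)" using s by (metis mult.assoc mult.commute)
      then have "x' * p = x * s" using \<open>b \<noteq> 0\<close> by simp
      moreover have "x * s \<in> Q"
        using is_ideal_mult[OF is_prime_ideal_ideal[OF Q(1)] x, of s] by (simp add: mult.commute)
      ultimately have "x' \<in> Q" using is_prime_ideal_mult[OF Q(1), of x' p] p(2) by simp
      with x' show ?thesis by (metis mult.commute)
    qed
    then have "b dvd c"
      by (rule normal_domain_dvd_if_stable_ideal[OF noeth normal \<open>b \<noteq> 0\<close>
            is_prime_ideal_ideal[OF Q(1)] q])
    then have "1 \<in> ?P" by (simp add: colon_ideal_def)
    then show False
      using is_ideal_mult[OF is_prime_ideal_ideal[OF prime]] prime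
      unfolding is_prime_ideal_def by (metis UNIV_eq_I mult.right_neutral)
  qed
qed

lemma dvd_if_colon_ideal_not_in_height_one_prime:
  fixes a b :: "'a::idom"
  assumes noeth: "noetherian_ring TYPE('a)" and normal: "normal_domain TYPE('a)"
    and "b \<noteq> 0" and avoids: "\<And>P. height_one_prime P \<Longrightarrow> \<not> colon_ideal b a \<subseteq> P"
  shows "b dvd a"
proof (rule ccontr)
  assume "\<not> b dvd a"
  define F where "F = {colon_ideal b (x * a) | x. \<not> b dvd x * a}"
  have "colon_ideal b (1 * a) \<in> F"
    unfolding F_def using \<open>\<not> b dvd a\<close> by (intro CollectI exI[of _ 1]) simp
  moreover have "\<forall>I\<in>F. is_ideal I" unfolding F_def using is_ideal_colon_ideal by blast
  ultimately obtain P where "P \<in> F" and maximal: "\<forall>Q\<in>F. P \<subseteq> Q \<longrightarrow> Q = P"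
    using noetherian_ring_maximal_ideal[OF noeth] by blast
  then obtain x where P: "P = colon_ideal b (x * a)" and x: "\<not> b dvd x * a"
    unfolding F_def by blast
  have "colon_ideal b (y * (x * a)) = P" if "\<not> b dvd y * (x * a)" for y
  proof -
    have "colon_ideal b ((y * x) * a) \<in> F" unfolding F_def using that by (intro CollectI exI[of _ "y * x"]) (simp add: mult.assoc)
    then show ?thesis using maximal colon_ideal_mono[of b "x * a" y] by (simp add: P mult.assoc)
  qed
  then have "is_prime_ideal P" unfolding P by (rule prime_colon_ideal_if_maximal[OF x])
  then have "height_one_prime P" unfolding P by (rule height_one_colon_ideal[OF noeth normal \<open>b \<noteq> 0\<close>])
  moreover have "colon_ideal b a \<subseteq> P" unfolding P by (rule colon_ideal_mono)
  ultimately show False using avoids by blast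
qed

section \<open>Derivations and their iterates\<close>

lemma funpow_cong_on_invariant:
  assumes "\<And>x. x \<in> S \<Longrightarrow> f x = g x" "\<And>x. x \<in> S \<Longrightarrow> g x \<in> S" "x \<in> S"
  shows "(f ^^ n) x = (g ^^ n) x"
proof -
  have "(g ^^ n) x \<in> S \<and> (f ^^ n) x = (g ^^ n) x" by (induction n) (simp_all add: assms)
  then show ?thesis ..
qed

lemma derivation_on_add: "derivation_on S D \<Longrightarrow> x \<in> S \<Longrightarrow> y \<in> S \<Longrightarrow> D (x + y) = D x + D y"
  unfolding derivation_on_def by blast

lemma derivation_on_mult:
  "derivation_on S D \<Longrightarrow> x \<in> S \<Longrightarrow> y \<in> S \<Longrightarrow> D (x * y) = x * D y + y * D x"
  unfolding derivation_on_def by blast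

lemma derivation_on_closed: "derivation_on S D \<Longrightarrow> x \<in> S \<Longrightarrow> D x \<in> S"
  unfolding derivation_on_def by blast

lemma derivation_on_zero: "derivation_on S D \<Longrightarrow> 0 \<in> S \<Longrightarrow> D 0 = 0"
  using derivation_on_add[of S D 0 0] by simp

lemma derivation_on_one: "derivation_on S D \<Longrightarrow> 1 \<in> S \<Longrightarrow> D 1 = 0"
  using derivation_on_mult[of S D 1 1] by simp

lemma derivation_on_sum:
  assumes "derivation_on S D" "0 \<in> S" "\<And>x y. x \<in> S \<Longrightarrow> y \<in> S \<Longrightarrow> x + y \<in> S"
    and "\<And>t. t \<in> T \<Longrightarrow> f t \<in> S"
  shows "D (\<Sum>t\<in>T. f t) = (\<Sum>t\<in>T. D (f t))"
proof -
  have "D (\<Sum>t\<in>T. f t) = (\<Sum>t\<in>T. D (f t)) \<and> (\<Sum>t\<in>T. f t) \<in> S"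
    using assms(4)
  proof (induction T rule: infinite_finite_induct)
    case (insert t T)
    then show ?case using derivation_on_add[OF assms(1)] assms(3) by simp
  qed (simp_all add: derivation_on_zero[OF assms(1,2)] assms(2))
  then show ?thesis ..
qed

lemma derivation_on_power:
  assumes "derivation_on S D" "\<And>x y. x \<in> S \<Longrightarrow> y \<in> S \<Longrightarrow> x * y \<in> S" "x \<in> S"
  shows "D (x ^ Suc n) = of_nat (Suc n) * x ^ n * D x"
proof (induction n)
  case (Suc n)
  have "x ^ Suc n \<in> S" by (induction n) (simp_all add: assms(2,3))
  then have "D (x * x ^ Suc n) = x * D (x ^ Suc n) + x ^ Suc n * D x"
    by (rule derivation_on_mult[OF assms(1,3)])
  with Suc show ?case by (simp add: algebra_simps)
qed simp

lemma derivation_power_mult_self: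
  assumes "derivation_on UNIV D"
  shows "x * D (x ^ n) = of_nat n * x ^ n * D x"
proof (cases n)
  case (Suc m)
  then show ?thesis using derivation_on_power[OF assms, of x m] by (simp add: algebra_simps)
qed (simp add: derivation_on_one[OF assms])

lemma derivation_eq_if_eq_on_power:
  fixes D D' :: "'a::{idom, ring_char_0} \<Rightarrow> 'a"
  assumes "derivation_on UNIV D" "derivation_on UNIV D'" "x \<noteq> 0"
    and "D (x ^ Suc n) = D' (x ^ Suc n)"
  shows "D x = D' x"
  using assms(3,4) derivation_on_power[OF assms(1), of x n] derivation_on_power[OF assms(2), of x n]
  by (simp del: of_nat_Suc)

lemma derivation_on_power_mult_identity:
  assumes "derivation_on S \<delta>" "\<And>x y. x \<in> S \<Longrightarrow> y \<in> S \<Longrightarrow> x * y \<in> S"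
    and "h * v \<in> S" "h ^ Suc e \<in> S" "v ^ Suc e \<in> S"
  shows "v ^ Suc e * \<delta> (h ^ Suc e) = h ^ e * (of_nat (Suc e) * v ^ e * \<delta> (h * v) - h * \<delta> (v ^ Suc e))"
proof -
  have "h ^ Suc e * \<delta> (v ^ Suc e) + v ^ Suc e * \<delta> (h ^ Suc e) = \<delta> (h ^ Suc e * v ^ Suc e)"
    by (rule derivation_on_mult[OF assms(1,4,5), symmetric])
  also have "\<dots> = \<delta> ((h * v) ^ Suc e)" by (simp only: power_mult_distrib)
  also have "\<dots> = of_nat (Suc e) * (h * v) ^ e * \<delta> (h * v)"
    by (rule derivation_on_power[OF assms(1,2,3)])
  finally have "v ^ Suc e * \<delta> (h ^ Suc e)
      = of_nat (Suc e) * (h * v) ^ e * \<delta> (h * v) - h ^ Suc e * \<delta> (v ^ Suc e)"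
    by (metis add_diff_cancel_left')
  also have "\<dots> = h ^ e * (of_nat (Suc e) * v ^ e * \<delta> (h * v) - h * \<delta> (v ^ Suc e))"
    by (simp add: power_mult_distrib algebra_simps)
  finally show ?thesis .
qed

text \<open>For \<open>x \<noteq> 0\<close> at which \<open>D\<close> is nilpotent, \<open>nil_deg D x\<close> is the largest \<open>n\<close> with
  \<open>(D ^^ n) x \<noteq> 0\<close>; if \<open>D\<close> is not nilpotent at \<open>x\<close> it is a junk value (\<open>LEAST\<close> of an
  unsatisfiable predicate).\<close>

definition nil_deg :: "('a::zero \<Rightarrow> 'a) \<Rightarrow> 'a \<Rightarrow> nat" where
  "nil_deg D x = (LEAST n. (D ^^ Suc n) x = 0)"

lemma funpow_nil_deg_neq_0:
  assumes "x \<noteq> 0"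
  shows "(D ^^ nil_deg D x) x \<noteq> 0"
proof (cases "nil_deg D x")
  case (Suc m)
  then have "m < nil_deg D x" by simp
  then have "(D ^^ Suc m) x \<noteq> 0" unfolding nil_deg_def by (rule not_less_Least)
  with Suc show ?thesis by simp
qed (simp add: assms)

context
  fixes D :: "'a::comm_ring_1 \<Rightarrow> 'a"
  assumes derivation: "derivation_on UNIV D"
begin

lemma funpow_derivation_zero: "(D ^^ n) 0 = 0"
  by (induction n) (simp_all add: derivation_on_zero[OF derivation])

lemma funpow_derivation_add: "(D ^^ n) (x + y) = (D ^^ n) x + (D ^^ n) y"
  by (induction n) (simp_all add: derivation_on_add[OF derivation])

lemma funpow_derivation_of_nat_mult: "(D ^^ n) (of_nat c * x) = of_nat c * (D ^^ n) x"
  by (induction c) (simp_all add: funpow_derivation_zero funpow_derivation_add distrib_right)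

lemma funpow_derivation_eq_0_mono: "(D ^^ m) x = 0 \<Longrightarrow> m \<le> n \<Longrightarrow> (D ^^ n) x = 0"
  by (metis funpow_add funpow_derivation_zero le_add_diff_inverse2 o_apply)

lemma funpow_derivation_mult_step:
  "(D ^^ Suc n) (x * y) = (D ^^ n) (x * D y) + (D ^^ n) (y * D x)"
  by (simp add: funpow_swap1 derivation_on_mult[OF derivation] funpow_derivation_add)

lemma funpow_derivation_mult_eq_0:
  assumes "(D ^^ Suc p) x = 0" "(D ^^ e) y = 0"
  shows "(D ^^ (p + e)) (x * y) = 0"
  using assms
proof (induction "p + e" arbitrary: p e x y)
  case (Suc n)
  show ?case
  proof (cases e)
    case 0
    with Suc.prems show ?thesis by (simp add: funpow_derivation_zero)
  next
    case (Suc e')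
    with \<open>Suc n = p + e\<close> have n: "n = p + e'" "n = e' + p" by simp_all
    have y: "(D ^^ Suc e') y = 0" using Suc.prems(2) \<open>e = Suc e'\<close> by simp
    have Dx: "(D ^^ p) (D x) = 0" and Dy: "(D ^^ e') (D y) = 0"
      using Suc.prems(1) y by (simp_all add: funpow_swap1)
    have "(D ^^ n) (x * D y) = 0" using Suc.hyps(1)[OF n(1) Suc.prems(1) Dy] n(1) by simp
    moreover have "(D ^^ n) (y * D x) = 0" using Suc.hyps(1)[OF n(2) y Dx] n(2) by simp
    ultimately show ?thesis
      using funpow_derivation_mult_step[of n x y] \<open>Suc n = p + e\<close> by simp
  qed
qed simp

lemma funpow_derivation_mult_leading_term:
  assumes "(D ^^ Suc p) x = 0" "(D ^^ Suc e) y = 0"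
  shows "\<exists>c>0. (D ^^ (p + e)) (x * y) = of_nat c * ((D ^^ p) x * (D ^^ e) y)"
  using assms
proof (induction "p + e" arbitrary: p e x y)
  case 0
  then show ?case by (intro exI[of _ 1]) simp
next
  case (Suc n)
  let ?top = "(D ^^ p) x * (D ^^ e) y"
  have first: "\<exists>c. (e \<noteq> 0 \<longrightarrow> c > 0) \<and> (D ^^ n) (x * D y) = of_nat c * ?top"
  proof (cases e)
    case 0
    then have "D y = 0" using Suc.prems(2) by simp
    with \<open>e = 0\<close> show ?thesis by (intro exI[of _ 0]) (simp add: funpow_derivation_zero)
  next
    case (Suc e')
    with \<open>Suc n = p + e\<close> have n: "n = p + e'" by simp
    have Dy: "(D ^^ Suc e') (D y) = 0" "(D ^^ e') (D y) = (D ^^ e) y"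
      using Suc.prems(2) \<open>e = Suc e'\<close> by (simp_all only: funpow_Suc_right o_apply)
    from Suc.hyps(1)[OF n Suc.prems(1) Dy(1)] Dy(2) n \<open>e = Suc e'\<close> show ?thesis by auto
  qed
  have second: "\<exists>c. (p \<noteq> 0 \<longrightarrow> c > 0) \<and> (D ^^ n) (y * D x) = of_nat c * ?top"
  proof (cases p)
    case 0
    then have "D x = 0" using Suc.prems(1) by simp
    with \<open>p = 0\<close> show ?thesis by (intro exI[of _ 0]) (simp add: funpow_derivation_zero)
  next
    case (Suc p')
    with \<open>Suc n = p + e\<close> have n: "n = e + p'" by simp
    have Dx: "(D ^^ Suc p') (D x) = 0" "(D ^^ p') (D x) = (D ^^ p) x"
      using Suc.prems(1) \<open>p = Suc p'\<close> by (simp_all only: funpow_Suc_right o_apply)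
    from Suc.hyps(1)[OF n Suc.prems(2) Dx(1)] Dx(2) n \<open>p = Suc p'\<close> show ?thesis
      by (auto simp: mult.commute)
  qed
  from first second obtain c1 c2 where
    c1: "e \<noteq> 0 \<longrightarrow> c1 > 0" "(D ^^ n) (x * D y) = of_nat c1 * ?top" and
    c2: "p \<noteq> 0 \<longrightarrow> c2 > 0" "(D ^^ n) (y * D x) = of_nat c2 * ?top"
    by blast
  have "(D ^^ (p + e)) (x * y) = of_nat (c1 + c2) * ?top"
    using funpow_derivation_mult_step[of n x y] \<open>Suc n = p + e\<close> c1(2) c2(2)
    by (simp add: distrib_right)
  moreover have "c1 + c2 > 0" using c1(1) c2(1) \<open>Suc n = p + e\<close> by auto
  ultimately show ?case by blast
qed


lemma funpow_Suc_nil_deg: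
  assumes "(D ^^ n) x = 0"
  shows "(D ^^ Suc (nil_deg D x)) x = 0"
proof -
  have "(D ^^ Suc n) x = 0"
    using funpow_derivation_eq_0_mono[OF assms, of "Suc n"] by simp
  then show ?thesis unfolding nil_deg_def by (rule LeastI)
qed

lemma funpow_eq_0_iff_nil_deg_less:
  assumes "(D ^^ m) x = 0" "x \<noteq> 0"
  shows "(D ^^ n) x = 0 \<longleftrightarrow> nil_deg D x < n"
proof
  assume "(D ^^ n) x = 0"
  then show "nil_deg D x < n"
    using funpow_nil_deg_neq_0[OF assms(2)] funpow_derivation_eq_0_mono
    by (meson not_le)
next
  assume "nil_deg D x < n"
  then show "(D ^^ n) x = 0"
    using funpow_derivation_eq_0_mono[OF funpow_Suc_nil_deg[OF assms(1)]] by simp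
qed

lemma nilpotent_derivation_sum:
  "(\<And>t. t \<in> T \<Longrightarrow> \<exists>n. (D ^^ n) (f t) = 0) \<Longrightarrow> \<exists>n. (D ^^ n) (\<Sum>t\<in>T. f t) = 0"
proof (induction T rule: infinite_finite_induct)
  case (insert t T)
  then obtain m n where "(D ^^ m) (f t) = 0" "(D ^^ n) (\<Sum>t\<in>T. f t) = 0" by blast
  then have "(D ^^ (m + n)) (f t) = 0" "(D ^^ (m + n)) (\<Sum>t\<in>T. f t) = 0"
    using funpow_derivation_eq_0_mono by (meson le_add1 le_add2)+
  with insert.hyps show ?case
    by (intro exI[of _ "m + n"]) (simp add: funpow_derivation_add)
qed (simp_all add: funpow_derivation_zero)

lemma nilpotent_derivation_mult:
  "(D ^^ m) x = 0 \<Longrightarrow> (D ^^ n) y = 0 \<Longrightarrow> (D ^^ (m + n)) (x * y) = 0"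
  using funpow_derivation_mult_eq_0[of m x n y]
    funpow_derivation_eq_0_mono[of m x "Suc m"] by simp

lemma derivation_power_relation:
  "of_nat (Suc e) * (h ^ Suc e * (h ^ e * D z)) + of_nat e * (D (h ^ Suc e) * (h ^ e * z))
    = of_nat (Suc e) * (h ^ Suc e * D (h ^ e * z))"
proof -
  have Dp: "D (h ^ Suc e) = of_nat (Suc e) * h ^ e * D h"
    by (rule derivation_on_power[OF derivation]) simp_all
  have "h ^ Suc e * D (h ^ e * z) = h * h ^ e * (h ^ e * D z + z * D (h ^ e))"
    by (simp add: derivation_on_mult[OF derivation])
  also have "\<dots> = h ^ Suc e * (h ^ e * D z) + h ^ e * z * (h * D (h ^ e))"
    by (simp add: algebra_simps)
  also have "h * D (h ^ e) = of_nat e * h ^ e * D h"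
    by (rule derivation_power_mult_self[OF derivation])
  finally have "h ^ Suc e * D (h ^ e * z)
      = h ^ Suc e * (h ^ e * D z) + of_nat e * (h ^ e * z) * (h ^ e * D h)"
    by (simp add: algebra_simps)
  then show ?thesis unfolding Dp by (simp add: algebra_simps)
qed

end

context
  fixes D :: "'a::{idom, ring_char_0} \<Rightarrow> 'a"
  assumes derivation: "derivation_on UNIV D"
begin

lemma nil_deg_mult:
  assumes "(D ^^ m) x = 0" "(D ^^ n) y = 0" "x \<noteq> 0" "y \<noteq> 0"
  shows "nil_deg D (x * y) = nil_deg D x + nil_deg D y"
proof -
  let ?p = "nil_deg D x" and ?e = "nil_deg D y"
  have x: "(D ^^ Suc ?p) x = 0" and y: "(D ^^ Suc ?e) y = 0"
    using funpow_Suc_nil_deg[OF derivation] assms(1,2) by blast+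
  have xy: "(D ^^ (m + n)) (x * y) = 0" "x * y \<noteq> 0"
    using nilpotent_derivation_mult[OF derivation assms(1,2)] assms(3,4) by simp_all
  note iff = funpow_eq_0_iff_nil_deg_less[OF derivation xy]
  have "(D ^^ (?p + Suc ?e)) (x * y) = 0"
    by (rule funpow_derivation_mult_eq_0[OF derivation x y])
  then have upper: "nil_deg D (x * y) < ?p + Suc ?e" by (rule iff[THEN iffD1])
  obtain c where "c > 0" "(D ^^ (?p + ?e)) (x * y) = of_nat c * ((D ^^ ?p) x * (D ^^ ?e) y)"
    using funpow_derivation_mult_leading_term[OF derivation x y] by blast
  then have "(D ^^ (?p + ?e)) (x * y) \<noteq> 0"
    using funpow_nil_deg_neq_0[OF assms(3)] funpow_nil_deg_neq_0[OF assms(4)] by simp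
  then have lower: "\<not> nil_deg D (x * y) < ?p + ?e" by (simp add: iff)
  from upper lower show ?thesis by simp
qed

lemma nil_deg_decreases:
  assumes "(D ^^ m) a = 0" "(D ^^ n) q = 0" "(D ^^ n') q' = 0" "a \<noteq> 0" "q \<noteq> 0" "q' \<noteq> 0"
    and "c > 0" and relation: "of_nat c * (a * q') + of_nat u * (D a * q) = of_nat v * (a * D q)"
  shows "nil_deg D q' < nil_deg D q"
proof -
  let ?N = "nil_deg D a + nil_deg D q"
  have a: "(D ^^ Suc (nil_deg D a)) a = 0" and q: "(D ^^ Suc (nil_deg D q)) q = 0"
    using funpow_Suc_nil_deg[OF derivation] assms(1,2) by blast+
  then have Da: "(D ^^ nil_deg D a) (D a) = 0" and Dq: "(D ^^ nil_deg D q) (D q) = 0"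
    by (simp_all only: funpow_Suc_right o_apply)
  have "(D ^^ ?N) (a * D q) = 0" by (rule funpow_derivation_mult_eq_0[OF derivation a Dq])
  moreover have "(D ^^ ?N) (D a * q) = 0"
    using funpow_derivation_mult_eq_0[OF derivation q Da] by (metis add.commute mult.commute)
  ultimately have "of_nat c * (D ^^ ?N) (a * q') = 0"
    using arg_cong[OF relation, of "D ^^ ?N"]
    by (simp add: funpow_derivation_add[OF derivation] funpow_derivation_of_nat_mult[OF derivation])
  with \<open>c > 0\<close> have "(D ^^ ?N) (a * q') = 0" by simp
  moreover have "(D ^^ (m + n')) (a * q') = 0" "a * q' \<noteq> 0"
    using nilpotent_derivation_mult[OF derivation assms(1,3)] assms(4,6) by simp_all
  ultimately have "nil_deg D (a * q') < ?N"
    using funpow_eq_0_iff_nil_deg_less[OF derivation] by blast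
  then show ?thesis using nil_deg_mult[OF assms(1,3,4,6)] by simp
qed

lemma funpow_derivation_eq_0_if_power_multiples:
  assumes power: "(D ^^ m) (h ^ Suc e) = 0"
    and multiples: "\<And>k. \<exists>n. (D ^^ n) (h ^ e * (D ^^ k) h) = 0"
  shows "\<exists>k. (D ^^ k) h = 0"
proof (rule ccontr)
  assume "\<nexists>k. (D ^^ k) h = 0"
  then have nonzero: "(D ^^ k) h \<noteq> 0" for k by blast
  define q where "q k = h ^ e * (D ^^ k) h" for k
  have "h \<noteq> 0" using nonzero[of 0] by simp
  then have "h ^ Suc e \<noteq> 0" by simp
  have "q k \<noteq> 0" for k using \<open>h \<noteq> 0\<close> nonzero by (simp add: q_def)
  have decreasing: "nil_deg D (q (Suc k)) < nil_deg D (q k)" for k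
  proof -
    obtain n n' where "(D ^^ n) (q k) = 0" "(D ^^ n') (q (Suc k)) = 0"
      using multiples unfolding q_def by blast
    moreover have "of_nat (Suc e) * (h ^ Suc e * q (Suc k)) + of_nat e * (D (h ^ Suc e) * q k)
        = of_nat (Suc e) * (h ^ Suc e * D (q k))"
      unfolding q_def using derivation_power_relation[OF derivation, of e h "(D ^^ k) h"] by simp
    ultimately show ?thesis
      using nil_deg_decreases power \<open>h ^ Suc e \<noteq> 0\<close> \<open>\<And>k. q k \<noteq> 0\<close> by blast
  qed
  have "nil_deg D (q k) + k \<le> nil_deg D (q 0)" for k
  proof (induction k)
    case (Suc k)
    then show ?case using decreasing[of k] by simp
  qed simp
  from this[of "Suc (nil_deg D (q 0))"] show False by simp
qed

end

section \<open>Graded rings and Veronese subrings\<close>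

locale Z_graded =
  fixes G :: "int \<Rightarrow> 'a::comm_ring_1 set"
  assumes grading: "Z_grading G"
begin

lemma G_zero: "0 \<in> G i"
  using grading unfolding Z_grading_def by blast

lemma G_add: "x \<in> G i \<Longrightarrow> y \<in> G i \<Longrightarrow> x + y \<in> G i"
  using grading unfolding Z_grading_def by blast

lemma G_mult: "x \<in> G i \<Longrightarrow> y \<in> G j \<Longrightarrow> x * y \<in> G (i + j)"
  using grading unfolding Z_grading_def by blast

lemma ex1_decomposition:
  "\<exists>!f. finite {i. f i \<noteq> 0} \<and> (\<forall>i. f i \<in> G i) \<and> x = (\<Sum>i\<in>{i. f i \<noteq> 0}. f i)"
  using grading unfolding Z_grading_def by blast

definition hcomp :: "'a \<Rightarrow> int \<Rightarrow> 'a" where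
  "hcomp x = (THE f. finite {i. f i \<noteq> 0} \<and> (\<forall>i. f i \<in> G i) \<and> x = (\<Sum>i\<in>{i. f i \<noteq> 0}. f i))"

definition hsupp :: "'a \<Rightarrow> int set" where
  "hsupp x = {i. hcomp x i \<noteq> 0}"

lemma hcomp_decomposition:
  "finite (hsupp x) \<and> (\<forall>i. hcomp x i \<in> G i) \<and> x = (\<Sum>i\<in>hsupp x. hcomp x i)"
  unfolding hcomp_def hsupp_def by (rule theI'[OF ex1_decomposition])

lemma finite_hsupp: "finite (hsupp x)"
  using hcomp_decomposition by blast

lemma hcomp_in_G: "hcomp x i \<in> G i"
  using hcomp_decomposition by blast

lemma sum_hcomp: "(\<Sum>i\<in>hsupp x. hcomp x i) = x"
  using hcomp_decomposition[of x] by simp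

lemma sum_hcomp_superset:
  assumes "finite S" "hsupp x \<subseteq> S"
  shows "(\<Sum>i\<in>S. hcomp x i) = x"
proof -
  have "(\<Sum>i\<in>hsupp x. hcomp x i) = (\<Sum>i\<in>S. hcomp x i)"
    by (rule sum.mono_neutral_left[OF assms]) (simp add: hsupp_def)
  then show ?thesis by (simp only: sum_hcomp)
qed

lemma hcomp_eqI:
  assumes "finite S" "\<And>i. f i \<in> G i" "\<And>i. i \<notin> S \<Longrightarrow> f i = 0" "x = (\<Sum>i\<in>S. f i)"
  shows "hcomp x = f"
proof -
  have supp: "{i. f i \<noteq> 0} \<subseteq> S" using assms(3) by blast
  then have "x = (\<Sum>i\<in>{i. f i \<noteq> 0}. f i)"
    using assms(4) sum.mono_neutral_left[OF assms(1) supp, of f] by auto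
  then have "finite {i. f i \<noteq> 0} \<and> (\<forall>i. f i \<in> G i) \<and> x = (\<Sum>i\<in>{i. f i \<noteq> 0}. f i)"
    using finite_subset[OF supp assms(1)] assms(2) by blast
  then show ?thesis
    using ex1_decomposition[of x] hcomp_decomposition[of x] unfolding hsupp_def by blast
qed

lemma hcomp_homogeneous: "x \<in> G i \<Longrightarrow> hcomp x = (\<lambda>j. if j = i then x else 0)"
  by (rule hcomp_eqI[of "{i}"]) (auto simp: G_zero)

lemma hsupp_homogeneous: "x \<in> G i \<Longrightarrow> hsupp x \<subseteq> {i}"
  by (auto simp: hsupp_def hcomp_homogeneous)

lemma hcomp_zero: "hcomp 0 = (\<lambda>j. 0)"
  using hcomp_homogeneous[OF G_zero[of 0]] by (simp add: fun_eq_iff)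

lemma hcomp_add: "hcomp (x + y) = (\<lambda>j. hcomp x j + hcomp y j)"
proof (rule hcomp_eqI[of "hsupp x \<union> hsupp y"])
  show "x + y = (\<Sum>i\<in>hsupp x \<union> hsupp y. hcomp x i + hcomp y i)"
    using sum_hcomp_superset[of "hsupp x \<union> hsupp y"] finite_hsupp
    by (simp add: sum.distrib)
  show "finite (hsupp x \<union> hsupp y)" by (simp add: finite_hsupp)
qed (auto simp: hcomp_in_G G_add hsupp_def)

lemma hcomp_of_nat_mult: "hcomp (of_nat n * x) = (\<lambda>j. of_nat n * hcomp x j)"
  by (induction n) (simp_all add: hcomp_zero hcomp_add distrib_right)

lemma hcomp_mult_homogeneous:
  assumes "g \<in> G k"
  shows "hcomp (g * y) = (\<lambda>m. g * hcomp y (m - k))"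
proof (rule hcomp_eqI[of "(\<lambda>j. j + k) ` hsupp y"])
  show "g * hcomp y (m - k) \<in> G m" for m
    using G_mult[OF assms hcomp_in_G, of y "m - k"] by simp
  have "g * y = g * (\<Sum>j\<in>hsupp y. hcomp y j)" by (simp only: sum_hcomp)
  also have "\<dots> = (\<Sum>j\<in>hsupp y. g * hcomp y j)" by (rule sum_distrib_left)
  also have "\<dots> = (\<Sum>m\<in>(\<lambda>j. j + k) ` hsupp y. g * hcomp y (m - k))"
    by (subst sum.reindex) (auto simp: inj_on_def)
  finally show "g * y = (\<Sum>m\<in>(\<lambda>j. j + k) ` hsupp y. g * hcomp y (m - k))" .
  show "finite ((\<lambda>j. j + k) ` hsupp y)" by (simp add: finite_hsupp)
  show "g * hcomp y (m - k) = 0" if "m \<notin> (\<lambda>j. j + k) ` hsupp y" for m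
  proof -
    have "m - k \<notin> hsupp y" using that by (metis diff_add_cancel image_eqI)
    then show ?thesis by (simp add: hsupp_def)
  qed
qed

lemma one_in_G0: "1 \<in> G 0"
proof -
  let ?e = "hcomp 1"
  have absorb: "x * ?e k = 0" if "x \<in> G j" "k \<noteq> 0" for x j k
    using fun_cong[OF hcomp_mult_homogeneous[OF that(1), of 1], of "j + k"] that
    by (simp add: hcomp_homogeneous)
  have "?e k = 0" if "k \<noteq> 0" for k
  proof -
    have "?e k = (\<Sum>i\<in>hsupp 1. ?e i) * ?e k" by (simp add: sum_hcomp)
    also have "\<dots> = 0"
      by (simp add: sum_distrib_right absorb[OF hcomp_in_G that])
    finally show ?thesis .
  qed
  then have "hsupp 1 \<subseteq> {0}" unfolding hsupp_def by blast
  then have "?e 0 = 1" using sum_hcomp_superset[of "{0}" 1] by simp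
  then show ?thesis using hcomp_in_G[of 1 0] by simp
qed

lemma power_in_G: "x \<in> G i \<Longrightarrow> x ^ n \<in> G (int n * i)"
proof (induction n)
  case (Suc n)
  then have "x * x ^ n \<in> G (i + int n * i)" using G_mult by blast
  then show ?case by (simp add: algebra_simps)
qed (simp add: one_in_G0)

end

lemma coprime_exists_dvd_add_mult:
  fixes i j :: int
  assumes "coprime j (int d)" "d > 0"
  shows "\<exists>k::nat. int d dvd i + int k * j"
proof -
  obtain s t where "s * j + t * int d = 1" using bezout_int assms(1) by (metis coprime_iff_gcd_eq_1)
  then have sj: "s * j = 1 - t * int d" by simp
  define q where "q = (- i * s) div int d"
  define k where "k = nat ((- i * s) mod int d)"
  have "(- i * s) mod int d = - i * s - int d * q"
    by (simp add: q_def minus_div_mult_eq_mod[symmetric])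
  moreover have "(- i * s) mod int d \<ge> 0" using assms(2) by simp
  ultimately have k: "int k = - i * s - int d * q" by (simp add: k_def)
  have "i + int k * j = i - i * (s * j) - int d * q * j" unfolding k by (simp add: algebra_simps)
  also have "\<dots> = int d * (i * t - q * j)" unfolding sj by (simp add: algebra_simps)
  finally show ?thesis by (metis dvdI)
qed

locale veronese_graded = Z_graded +
  fixes d :: nat
  assumes d_pos: "d > 0"
begin

lemma d_Suc: obtains e where "d = Suc e"
  using d_pos gr0_implies_Suc by blast

definition veronese_module :: "int \<Rightarrow> 'a set" where
  "veronese_module r = {x. \<forall>j\<in>hsupp x. int d dvd j - r}"

lemma veronese_module_cong: "int d dvd r - r' \<Longrightarrow> veronese_module r = veronese_module r'"
  unfolding veronese_module_def by (metis (opaque_lifting) dvd_add_left_iff diff_add_cancel add_diff_eq)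

lemma zero_in_veronese_module: "0 \<in> veronese_module r"
  by (simp add: veronese_module_def hsupp_def hcomp_zero)

lemma add_in_veronese_module:
  assumes "x \<in> veronese_module r" "y \<in> veronese_module r"
  shows "x + y \<in> veronese_module r"
proof (unfold veronese_module_def, intro CollectI ballI)
  fix j assume "j \<in> hsupp (x + y)"
  then have "j \<in> hsupp x \<or> j \<in> hsupp y" by (auto simp: hsupp_def hcomp_add)
  then show "int d dvd j - r" using assms by (auto simp: veronese_module_def)
qed

lemma sum_in_veronese_module:
  "(\<And>t. t \<in> T \<Longrightarrow> f t \<in> veronese_module r) \<Longrightarrow> (\<Sum>t\<in>T. f t) \<in> veronese_module r"
  by (induction T rule: infinite_finite_induct)
    (simp_all add: zero_in_veronese_module add_in_veronese_module)

lemma homogeneous_in_veronese_module: "x \<in> G j \<Longrightarrow> x \<in> veronese_module j"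
  unfolding veronese_module_def using hsupp_homogeneous[of x j] by auto

lemma homogeneous_mult_in_veronese_module:
  assumes "g \<in> G k" "y \<in> veronese_module s"
  shows "g * y \<in> veronese_module (k + s)"
proof (unfold veronese_module_def, intro CollectI ballI)
  fix m assume "m \<in> hsupp (g * y)"
  then have "m - k \<in> hsupp y" by (auto simp: hsupp_def hcomp_mult_homogeneous[OF assms(1)])
  then have "int d dvd m - k - s" using assms(2) by (simp add: veronese_module_def)
  then show "int d dvd m - (k + s)" by (simp add: algebra_simps)
qed

lemma mult_in_veronese_module:
  assumes "x \<in> veronese_module r" "y \<in> veronese_module s"
  shows "x * y \<in> veronese_module (r + s)"
proof -
  have "hcomp x i * y \<in> veronese_module (r + s)" if "i \<in> hsupp x" for i
  proof -
    have "int d dvd i - r" using assms(1) that by (simp add: veronese_module_def)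
    then have "veronese_module (i + s) = veronese_module (r + s)"
      by (intro veronese_module_cong) (simp add: algebra_simps)
    with homogeneous_mult_in_veronese_module[OF hcomp_in_G assms(2)] show ?thesis by blast
  qed
  then have "(\<Sum>i\<in>hsupp x. hcomp x i) * y \<in> veronese_module (r + s)"
    unfolding sum_distrib_right by (rule sum_in_veronese_module)
  then show ?thesis by (simp only: sum_hcomp)
qed

lemma veronese_eq_veronese_module: "veronese G d = veronese_module 0"
proof (intro set_eqI iffI)
  fix x assume "x \<in> veronese G d"
  then obtain f where f: "\<forall>i. f i \<in> G (int d * i)" "x = (\<Sum>i\<in>{i. f i \<noteq> 0}. f i)"
    unfolding veronese_def by blast
  have "f i \<in> veronese_module 0" for i
    using homogeneous_in_veronese_module[OF f(1)[rule_format, of i]] veronese_module_cong[of "int d * i" 0]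
    by simp
  with f(2) show "x \<in> veronese_module 0" by (simp add: sum_in_veronese_module)
next
  fix x assume x: "x \<in> veronese_module 0"
  define f where "f i = hcomp x (int d * i)" for i
  have inj: "inj_on (\<lambda>i. int d * i) A" for A using d_pos by (simp add: inj_on_def)
  have image: "(\<lambda>i. int d * i) ` {i. f i \<noteq> 0} = hsupp x"
    using x by (force simp: f_def hsupp_def veronese_module_def elim!: dvdE)
  then have "finite {i. f i \<noteq> 0}"
    using finite_hsupp by (metis finite_imageD inj)
  moreover have "x = (\<Sum>i\<in>{i. f i \<noteq> 0}. f i)"
  proof -
    have "x = (\<Sum>j\<in>hsupp x. hcomp x j)" by (simp only: sum_hcomp)
    also have "\<dots> = (\<Sum>j\<in>(\<lambda>i. int d * i) ` {i. f i \<noteq> 0}. hcomp x j)" by (simp only: image)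
    also have "\<dots> = (\<Sum>i\<in>{i. f i \<noteq> 0}. f i)" by (simp add: sum.reindex[OF inj] f_def)
    finally show ?thesis .
  qed
  moreover have "\<forall>i. f i \<in> G (int d * i)" by (simp add: f_def hcomp_in_G)
  ultimately show "x \<in> veronese G d" unfolding veronese_def by blast
qed

lemma zero_in_veronese: "0 \<in> veronese G d"
  by (simp add: veronese_eq_veronese_module zero_in_veronese_module)

lemma add_in_veronese: "x \<in> veronese G d \<Longrightarrow> y \<in> veronese G d \<Longrightarrow> x + y \<in> veronese G d"
  by (simp add: veronese_eq_veronese_module add_in_veronese_module)

lemma mult_in_veronese: "x \<in> veronese G d \<Longrightarrow> y \<in> veronese G d \<Longrightarrow> x * y \<in> veronese G d"
  using mult_in_veronese_module[of x 0 y 0] by (simp add: veronese_eq_veronese_module)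

lemma homogeneous_in_veronese: "x \<in> G j \<Longrightarrow> int d dvd j \<Longrightarrow> x \<in> veronese G d"
  using homogeneous_in_veronese_module[of x j] veronese_module_cong[of j 0]
  by (simp add: veronese_eq_veronese_module)

end

section \<open>Extending derivations from the Veronese subring\<close>

locale veronese_derivation = veronese_graded G d for G :: "int \<Rightarrow> 'a::{idom, ring_char_0} set" and d +
  fixes \<delta> :: "'a \<Rightarrow> 'a"
  assumes derivation: "derivation_on (veronese G d) \<delta>"
begin

lemma power_derivative_dvd:
  assumes noeth: "noetherian_ring TYPE('a)" and normal: "normal_domain TYPE('a)"
    and unit: "(of_nat d :: 'a) dvd 1"
    and avoids: "\<forall>P. height_one_prime P \<longrightarrow> \<not> X_set G d \<subseteq> P"
    and h: "h \<in> G i"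
  shows "of_nat d * h ^ (d - 1) dvd \<delta> (h ^ d)"
proof (cases "h = 0")
  case True
  with d_pos show ?thesis by (simp add: zero_power derivation_on_zero[OF derivation zero_in_veronese])
next
  case False
  obtain e where d: "d = Suc e" by (rule d_Suc)
  obtain w :: 'a where w: "of_nat d * w = 1" using unit by (metis dvdE)
  let ?b = "of_nat (Suc e) * h ^ e"
  show ?thesis unfolding d diff_Suc_1
  proof (rule dvd_if_colon_ideal_not_in_height_one_prime[OF noeth normal])
    show "?b \<noteq> 0" using False by (simp del: of_nat_Suc)
  next
    fix P :: "'a set" assume P: "height_one_prime P"
    then have prime: "is_prime_ideal P" by (simp add: height_one_prime_def)
    obtain u j where u: "u \<in> G j" "coprime j (int d)" "u \<notin> P"
      using avoids P unfolding X_set_def by blast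
    obtain k where k: "int d dvd i + int k * j" using coprime_exists_dvd_add_mult[OF u(2) d_pos] by blast
    let ?v = "u ^ k"
    have v: "?v \<in> G (int k * j)" by (rule power_in_G[OF u(1)])
    have "h * ?v \<in> veronese G d" by (rule homogeneous_in_veronese[OF G_mult[OF h v] k])
    moreover have "?v ^ Suc e \<in> veronese G d" "h ^ Suc e \<in> veronese G d"
      using homogeneous_in_veronese[OF power_in_G[OF v, of d]]
        homogeneous_in_veronese[OF power_in_G[OF h, of d]] by (simp_all add: d)
    ultimately have "?v ^ Suc e * \<delta> (h ^ Suc e)
        = h ^ e * (of_nat (Suc e) * ?v ^ e * \<delta> (h * ?v) - h * \<delta> (?v ^ Suc e))"
      using derivation_on_power_mult_identity[OF derivation mult_in_veronese] by blast
    also have "\<dots> = ?b * (w * (of_nat (Suc e) * ?v ^ e * \<delta> (h * ?v) - h * \<delta> (?v ^ Suc e)))"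
      (is "h ^ e * ?X = _")
    proof -
      have "h ^ e * ?X = (of_nat (Suc e) * w) * (h ^ e * ?X)" using w d by simp
      then show ?thesis by (simp only: mult_ac)
    qed
    finally have "?v ^ Suc e \<in> colon_ideal ?b (\<delta> (h ^ Suc e))"
      by (simp add: colon_ideal_def)
    moreover have "?v ^ Suc e \<notin> P"
      using is_prime_ideal_power[OF prime, of u "k * Suc e"] u(3) by (simp only: power_mult) blast
    ultimately show "\<not> colon_ideal ?b (\<delta> (h ^ Suc e)) \<subseteq> P" by blast
  qed
qed

end

lemma derivation_eq_if_eq_on_veronese:
  fixes G :: "int \<Rightarrow> 'a::{idom, ring_char_0} set"
  assumes "veronese_graded G d" "derivation_on UNIV D" "derivation_on UNIV D'"
    and agree: "\<And>x. x \<in> veronese G d \<Longrightarrow> D x = D' x"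
  shows "D = D'"
proof
  interpret veronese_graded G d by fact
  have homogeneous: "D h = D' h" if "h \<in> G i" for h i
  proof (cases "h = 0")
    case True
    then show ?thesis using derivation_on_zero[OF assms(2)] derivation_on_zero[OF assms(3)] by simp
  next
    case False
    obtain e where d: "d = Suc e" by (rule d_Suc)
    have "h ^ Suc e \<in> veronese G d"
      using homogeneous_in_veronese[OF power_in_G[OF that, of d]] by (simp add: d)
    then show ?thesis by (rule derivation_eq_if_eq_on_power[OF assms(2,3) False agree])
  qed
  fix x
  have "D x = (\<Sum>i\<in>hsupp x. D (hcomp x i))"
    using derivation_on_sum[OF assms(2), of "hsupp x" "hcomp x"] by (simp add: sum_hcomp)
  also have "\<dots> = (\<Sum>i\<in>hsupp x. D' (hcomp x i))" using homogeneous[OF hcomp_in_G] by simp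
  also have "\<dots> = D' x"
    using derivation_on_sum[OF assms(3), of "hsupp x" "hcomp x"] by (simp add: sum_hcomp)
  finally show "D x = D' x" .
qed

locale extendable_veronese_derivation = veronese_derivation +
  assumes divisible: "\<And>h i. h \<in> G i \<Longrightarrow> of_nat d * h ^ (d - 1) dvd \<delta> (h ^ d)"
begin

definition hder :: "'a \<Rightarrow> 'a" where
  "hder h = (if h = 0 then 0 else THE y. of_nat d * h ^ (d - 1) * y = \<delta> (h ^ d))"

lemma hder_zero: "hder 0 = 0"
  by (simp add: hder_def)

lemma hder_unique:
  assumes "h \<noteq> 0" "of_nat d * h ^ (d - 1) * y = \<delta> (h ^ d)"
  shows "hder h = y"
proof -
  have nonzero: "of_nat d * h ^ (d - 1) \<noteq> (0::'a)" using assms(1) d_pos by simp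
  have "(THE y. of_nat d * h ^ (d - 1) * y = \<delta> (h ^ d)) = y"
  proof (rule the_equality)
    fix y' assume "of_nat d * h ^ (d - 1) * y' = \<delta> (h ^ d)"
    with assms(2) have "of_nat d * h ^ (d - 1) * y' = of_nat d * h ^ (d - 1) * y" by simp
    with nonzero show "y' = y" by (rule mult_left_cancel[THEN iffD1])
  qed (rule assms(2))
  with assms(1) show ?thesis by (simp add: hder_def)
qed

lemma hder_eq:
  assumes "h \<in> G i"
  shows "of_nat d * h ^ (d - 1) * hder h = \<delta> (h ^ d)"
proof (cases "h = 0")
  case True
  with d_pos show ?thesis
    by (simp add: zero_power hder_zero derivation_on_zero[OF derivation zero_in_veronese])
next
  case False
  obtain y where "\<delta> (h ^ d) = of_nat d * h ^ (d - 1) * y" using divisible[OF assms] by blast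
  with hder_unique[OF False] show ?thesis by simp
qed

lemma hder_veronese:
  assumes "h \<in> G j" "int d dvd j"
  shows "hder h = \<delta> h"
proof (cases "h = 0")
  case False
  obtain e where d: "d = Suc e" by (rule d_Suc)
  have "h \<in> veronese G d" by (rule homogeneous_in_veronese[OF assms])
  have "\<delta> (h ^ Suc e) = of_nat (Suc e) * h ^ e * \<delta> h"
    by (rule derivation_on_power[OF derivation mult_in_veronese \<open>h \<in> veronese G d\<close>])
  then have "of_nat d * h ^ (d - 1) * \<delta> h = \<delta> (h ^ d)" unfolding d diff_Suc_1 by (rule sym)
  with False show ?thesis by (rule hder_unique)
qed (simp add: hder_zero derivation_on_zero[OF derivation zero_in_veronese])

lemma hder_mult:
  assumes h: "h \<in> G i" and g: "g \<in> G j"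
  shows "hder (h * g) = h * hder g + g * hder h"
proof (cases "h = 0 \<or> g = 0")
  case False
  obtain e where d: "d = Suc e" by (rule d_Suc)
  have "h ^ d \<in> veronese G d" "g ^ d \<in> veronese G d"
    using homogeneous_in_veronese[OF power_in_G[OF h, of d]]
      homogeneous_in_veronese[OF power_in_G[OF g, of d]] by simp_all
  then have "\<delta> ((h * g) ^ d) = h ^ d * \<delta> (g ^ d) + g ^ d * \<delta> (h ^ d)"
    unfolding power_mult_distrib by (rule derivation_on_mult[OF derivation])
  also have "\<dots> = h ^ d * (of_nat d * g ^ e * hder g) + g ^ d * (of_nat d * h ^ e * hder h)"
    using hder_eq[OF h] hder_eq[OF g] by (simp add: d)
  also have "\<dots> = of_nat d * (h * g) ^ (d - 1) * (h * hder g + g * hder h)"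
    by (simp add: d power_mult_distrib algebra_simps)
  finally show ?thesis using False by (intro hder_unique) simp_all
qed (auto simp: hder_zero)

lemma hder_add:
  assumes h: "h \<in> G i" and g: "g \<in> G i"
  shows "hder (h + g) = hder h + hder g"
proof (cases "h = 0")
  case False
  let ?u = "h ^ (d - 1)"
  have u: "?u \<in> G (int (d - 1) * i)" by (rule power_in_G[OF h])
  have dvd: "int d dvd i + int (d - 1) * i"
    using d_pos by (simp add: of_nat_diff algebra_simps)
  have hu: "h * ?u \<in> G (i + int (d - 1) * i)" and gu: "g * ?u \<in> G (i + int (d - 1) * i)"
    using G_mult[OF h u] G_mult[OF g u] .
  have "hder ((h + g) * ?u) = \<delta> (h * ?u + g * ?u)"
    using hder_veronese[OF G_mult[OF G_add[OF h g] u] dvd] by (simp add: distrib_right)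
  also have "\<dots> = \<delta> (h * ?u) + \<delta> (g * ?u)"
    using derivation_on_add[OF derivation] homogeneous_in_veronese[OF hu dvd]
      homogeneous_in_veronese[OF gu dvd] by blast
  also have "\<dots> = hder (h * ?u) + hder (g * ?u)"
    using hder_veronese[OF hu dvd] hder_veronese[OF gu dvd] by simp
  finally have "hder ((h + g) * ?u) = hder (h * ?u) + hder (g * ?u)" .
  then have "?u * hder (h + g) = ?u * (hder h + hder g)"
    using hder_mult[OF G_add[OF h g] u] hder_mult[OF h u] hder_mult[OF g u]
    by (simp add: algebra_simps)
  with False show ?thesis by simp
qed (simp add: hder_zero)

lemma hder_in_veronese_module:
  assumes h: "h \<in> G i"
  shows "hder h \<in> veronese_module i"
proof (cases "h = 0")
  case False
  let ?g = "h ^ (d - 1)" and ?k = "int (d - 1) * i"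
  have g: "?g \<in> G ?k" by (rule power_in_G[OF h])
  have "?g * (of_nat d * hder h) = \<delta> (h ^ d)" using hder_eq[OF h] by (simp add: mult_ac)
  moreover have "\<delta> (h ^ d) \<in> veronese_module 0"
    using derivation_on_closed[OF derivation homogeneous_in_veronese[OF power_in_G[OF h, of d]]]
    by (simp add: veronese_eq_veronese_module)
  ultimately have in_0: "?g * (of_nat d * hder h) \<in> veronese_module 0" by simp
  show ?thesis unfolding veronese_module_def
  proof (intro CollectI ballI)
    fix j assume "j \<in> hsupp (hder h)"
    moreover have "hcomp (?g * (of_nat d * hder h)) (j + ?k) = ?g * (of_nat d * hcomp (hder h) j)"
      unfolding hcomp_mult_homogeneous[OF g] hcomp_of_nat_mult by simp
    ultimately have "j + ?k \<in> hsupp (?g * (of_nat d * hder h))"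
      using False d_pos by (simp add: hsupp_def)
    then have "int d dvd j + ?k - int d * i + int d * i" using in_0 by (simp add: veronese_module_def)
    moreover have "j + ?k - int d * i = j - i" using d_pos by (simp add: of_nat_diff algebra_simps)
    ultimately show "int d dvd j - i" by (metis dvd_add_left_iff dvd_triv_left)
  qed
qed (simp add: hder_zero zero_in_veronese_module)

definition ext_der :: "'a \<Rightarrow> 'a" where
  "ext_der x = (\<Sum>i\<in>hsupp x. hder (hcomp x i))"

lemma ext_der_superset:
  assumes "finite S" "hsupp x \<subseteq> S"
  shows "ext_der x = (\<Sum>i\<in>S. hder (hcomp x i))"
  unfolding ext_der_def
  by (rule sum.mono_neutral_left[OF assms]) (simp add: hsupp_def hder_zero)

lemma ext_der_homogeneous: "h \<in> G i \<Longrightarrow> ext_der h = hder h"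
  using ext_der_superset[of "{i}" h] hsupp_homogeneous[of h i] by (simp add: hcomp_homogeneous)

lemma ext_der_add: "ext_der (x + y) = ext_der x + ext_der y"
proof -
  let ?S = "hsupp x \<union> hsupp y"
  have S: "finite ?S" "hsupp (x + y) \<subseteq> ?S"
    by (simp add: finite_hsupp) (auto simp: hsupp_def hcomp_add)
  have "ext_der (x + y) = (\<Sum>i\<in>?S. hder (hcomp x i + hcomp y i))"
    using ext_der_superset[OF S] by (simp add: hcomp_add)
  also have "\<dots> = (\<Sum>i\<in>?S. hder (hcomp x i) + hder (hcomp y i))"
    using hder_add[OF hcomp_in_G hcomp_in_G] by simp
  also have "\<dots> = ext_der x + ext_der y"
    using ext_der_superset[OF S(1), of x] ext_der_superset[OF S(1), of y] by (simp add: sum.distrib)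
  finally show ?thesis .
qed

lemma ext_der_sum: "ext_der (\<Sum>t\<in>T. f t) = (\<Sum>t\<in>T. ext_der (f t))"
proof (induction T rule: infinite_finite_induct)
  case (insert t T)
  then show ?case by (simp add: ext_der_add)
qed (simp_all add: ext_der_def hsupp_def hcomp_zero)

lemma ext_der_mult: "ext_der (x * y) = x * ext_der y + y * ext_der x"
proof -
  let ?X = "hsupp x" and ?Y = "hsupp y"
  have "x * y = (\<Sum>i\<in>?X. hcomp x i) * (\<Sum>j\<in>?Y. hcomp y j)" by (simp only: sum_hcomp)
  then have "ext_der (x * y) = ext_der (\<Sum>i\<in>?X. \<Sum>j\<in>?Y. hcomp x i * hcomp y j)"
    by (simp only: sum_product)
  also have "\<dots> = (\<Sum>i\<in>?X. \<Sum>j\<in>?Y. hcomp x i * hder (hcomp y j) + hcomp y j * hder (hcomp x i))"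
    using ext_der_homogeneous[OF G_mult[OF hcomp_in_G hcomp_in_G]] hder_mult[OF hcomp_in_G hcomp_in_G]
    by (simp add: ext_der_sum)
  also have "\<dots> = (\<Sum>i\<in>?X. hcomp x i) * (\<Sum>j\<in>?Y. hder (hcomp y j))
      + (\<Sum>j\<in>?Y. hcomp y j) * (\<Sum>i\<in>?X. hder (hcomp x i))"
    by (simp add: sum.distrib sum_product sum.swap[of _ ?X])
  finally show ?thesis by (simp only: sum_hcomp ext_der_def)
qed

lemma derivation_ext_der: "derivation_on UNIV ext_der"
  unfolding derivation_on_def using ext_der_add ext_der_mult by blast

lemma ext_der_extends:
  assumes "x \<in> veronese G d"
  shows "ext_der x = \<delta> x"
proof -
  have dvd: "int d dvd i" if "i \<in> hsupp x" for i
    using assms that by (simp add: veronese_eq_veronese_module veronese_module_def)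
  then have "hcomp x i \<in> veronese G d" if "i \<in> hsupp x" for i
    using homogeneous_in_veronese[OF hcomp_in_G] that by blast
  then have "\<delta> x = (\<Sum>i\<in>hsupp x. \<delta> (hcomp x i))"
    using derivation_on_sum[OF derivation zero_in_veronese add_in_veronese, of "hsupp x" "hcomp x"]
    by (simp add: sum_hcomp)
  also have "\<dots> = ext_der x"
    unfolding ext_der_def using hder_veronese[OF hcomp_in_G dvd] by simp
  finally show ?thesis by simp
qed

lemma ext_der_in_veronese_module:
  assumes "x \<in> veronese_module r"
  shows "ext_der x \<in> veronese_module r"
  unfolding ext_der_def
proof (rule sum_in_veronese_module)
  fix i assume "i \<in> hsupp x"
  then have "veronese_module i = veronese_module r"
    using assms by (intro veronese_module_cong) (simp add: veronese_module_def)
  then show "hder (hcomp x i) \<in> veronese_module r"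
    using hder_in_veronese_module[OF hcomp_in_G] by blast
qed

lemma funpow_ext_der_in_veronese_module:
  "x \<in> veronese_module r \<Longrightarrow> (ext_der ^^ n) x \<in> veronese_module r"
  by (induction n) (simp_all add: ext_der_in_veronese_module)

lemma funpow_ext_der_veronese: "x \<in> veronese G d \<Longrightarrow> (ext_der ^^ n) x = (\<delta> ^^ n) x"
  by (rule funpow_cong_on_invariant[OF ext_der_extends derivation_on_closed[OF derivation]])

lemma power_mult_funpow_ext_der_in_veronese:
  assumes h: "h \<in> G i"
  shows "h ^ (d - 1) * (ext_der ^^ k) h \<in> veronese G d"
proof -
  have "h ^ (d - 1) \<in> veronese_module (int (d - 1) * i)"
    by (rule homogeneous_in_veronese_module[OF power_in_G[OF h]])
  moreover have "(ext_der ^^ k) h \<in> veronese_module i"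
    by (rule funpow_ext_der_in_veronese_module[OF homogeneous_in_veronese_module[OF h]])
  ultimately have "h ^ (d - 1) * (ext_der ^^ k) h \<in> veronese_module (int (d - 1) * i + i)"
    by (rule mult_in_veronese_module)
  moreover have "int (d - 1) * i + i = int d * i" using d_pos by (simp add: of_nat_diff algebra_simps)
  ultimately show ?thesis
    using veronese_module_cong[of "int d * i" 0] by (simp add: veronese_eq_veronese_module)
qed

lemma locally_nilpotent_ext_der:
  assumes nilpotent: "locally_nilpotent_on (veronese G d) \<delta>"
  shows "locally_nilpotent_on UNIV ext_der"
proof -
  have on_veronese: "\<exists>n. (ext_der ^^ n) x = 0" if "x \<in> veronese G d" for x
    using nilpotent that funpow_ext_der_veronese unfolding locally_nilpotent_on_def by metis
  have homogeneous: "\<exists>n. (ext_der ^^ n) h = 0" if h: "h \<in> G i" for h i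
  proof -
    obtain e where d: "d = Suc e" by (rule d_Suc)
    obtain m where "(ext_der ^^ m) (h ^ Suc e) = 0"
      using on_veronese homogeneous_in_veronese[OF power_in_G[OF h, of d]] by (auto simp: d)
    moreover have "\<exists>n. (ext_der ^^ n) (h ^ e * (ext_der ^^ k) h) = 0" for k
      using on_veronese power_mult_funpow_ext_der_in_veronese[OF h, of k] by (simp add: d)
    ultimately show ?thesis by (rule funpow_derivation_eq_0_if_power_multiples[OF derivation_ext_der])
  qed
  show ?thesis unfolding locally_nilpotent_on_def
  proof
    fix x :: 'a
    have "\<exists>n. (ext_der ^^ n) (\<Sum>i\<in>hsupp x. hcomp x i) = 0"
      by (rule nilpotent_derivation_sum[OF derivation_ext_der]) (use homogeneous[OF hcomp_in_G] in blast)
    then show "\<exists>n. (ext_der ^^ n) x = 0" by (simp only: sum_hcomp)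
  qed
qed

end

theorem lemma3p9:
  fixes G :: "int \<Rightarrow> 'a::{idom, ring_char_0} set"
    and d :: nat
    and \<delta> :: "'a \<Rightarrow> 'a"
  assumes "Z_grading G"
    and "noetherian_ring TYPE('a)"
    and "normal_domain TYPE('a)"
    and "grading_e G = 1"
    and "d \<ge> 2"
    and "(of_nat d :: 'a) dvd 1"
    and "\<forall>P. height_one_prime P \<longrightarrow> \<not> X_set G d \<subseteq> P"
    and "derivation_on (veronese G d) \<delta>"
  shows "(\<exists>!D. derivation_on UNIV D \<and> (\<forall>x\<in>veronese G d. D x = \<delta> x))
    \<and> (locally_nilpotent_on (veronese G d) \<delta> \<longrightarrow>
         (\<forall>D. derivation_on UNIV D \<and> (\<forall>x\<in>veronese G d. D x = \<delta> x) \<longrightarrow> locally_nilpotent_on UNIV D))"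
proof -
  have graded: "veronese_graded G d"
    using assms(1,5) by unfold_locales simp_all
  interpret veronese_derivation G d \<delta>
    using graded assms(8) by (simp add: veronese_derivation_def veronese_derivation_axioms_def)
  interpret extendable_veronese_derivation G d \<delta>
    by unfold_locales (rule power_derivative_dvd[OF assms(2,3,6,7)])
  have unique: "D = ext_der" if "derivation_on UNIV D" "\<forall>x\<in>veronese G d. D x = \<delta> x" for D
    using derivation_eq_if_eq_on_veronese[OF graded that(1) derivation_ext_der] that(2) ext_der_extends
    by simp
  show ?thesis
    using derivation_ext_der ext_der_extends unique locally_nilpotent_ext_der by blast
qed

end
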